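(* Let $\mathcal{E}_0=(E_0,\mathsf{Con}_0,\vdash_0)$ and $\mathcal{E}_1=(E_1,\mathsf{Con}_1,\vdash_1)$ be reversible event structures, and define $\mathcal{E}_0+\mathcal{E}_1=(E,\mathsf{Con},\vdash)$ as follows: - $E=\{(0,e)\mid e\in E_0\}\cup\{(1,e)\mid e\in E_1\}$, with injections $i_j:E_j\to E$, $i_j(e)=(j,e)$ for $j\in\{0,1\}$. - $X\in\mathsf{Con}$ iff $X=i_0(X_0)$ for some $X_0\in\mathsf{Con}_0$ or $X=i_1(X_1)$ for some $X_1\in\mathsf{Con}_1$. - $X\oslash Y\vdash(j,e)^*$ iff there are $X_j,Y_j\subseteq E_j$ with $X_j\oslash Y_j\vdash_j e^*$, $X=i_j(X_j)$, and $Y=i_j(Y_j)\cup(E\setminus i_j(E_j))$. Then $\mathcal{E}_0+\mathcal{E}_1$ is an RES, $i_0$ and $i_1$ are RES-morphisms, and $(\mathcal{E}_0+\mathcal{E}_1,i_0,i_1)$ is a coproduct of $\mathcal{E}_0$ and $\mathcal{E}_1$ in the category $\mathbf{RES}$.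
   Context: **Notation.** For a set $E$, write $\underline{E}=\{\underline{e}\mid e\in E\}$ for a disjoint set of formal "reversal" copies. $e^*$ denotes either $e$ (performing $e$) or $\underline{e}$ (reversing $e$); $(j,e)^*$ is $(j,e)$ or $\underline{(j,e)}$ correspondingly. For a partial function $f$ and a set $X$, write $f(X)=\{f(x)\mid x\in X,\ f(x)\text{ defined}\}$. $\bot$ denotes undefined. Writing $f(e)^*$ means $f(e)$ if $e^*=e$ and $\underline{f(e)}$ if $e^*=\underline{e}$. **Reversible event structures.** A reversible event structure (RES) is a triple $(E,\mathsf{Con},\vdash)$ where: - $E$ is a set of events. - $\mathsf{Con}$ is a set of finite subsets of $E$, closed under subsets. - ${\vdash}\subseteq\mathsf{Con}\times 2^E\times(E\cup\underline{E})$ is the enabling relation. We write $X\oslash Y\vdash e^*$ for $(X,Y,e^* )\in{\vdash}$. - The following axioms hold: 1. If $X\oslash Y\vdash e^*$ then $(X\cup\{e\})\cap Y=\emptyset$. 2. If $X\oslash Y\vdash\underline{e}$ then $e\in X$. 3. If $X\oslash Y\vdash e^*$, $X\subseteq X'\in\mathsf{Con}$ and $X'\cap Y=\emptyset$, then $X'\oslash Y\vdash e^*$. **RES-morphisms.** An RES-morphism $f:(E_0,\mathsf{Con}_0,\vdash_0)\to(E_1,\mathsf{Con}_1,\vdash_1)$ is a partial function $f:E_0\rightharpoonup E_1$ such that: - whenever $f(e)\neq\bot$ and $X\oslash Y\vdash_0 e^*$, there exists $Y_1\subseteq E_1$ such that every $e_0\in E_0$ with $f(e_0)\in Y_1$ lies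 in $Y$, and $f(X)\oslash Y_1\vdash_1 f(e)^*$; - for every $X_0\in\mathsf{Con}_0$, $f(X_0)\in\mathsf{Con}_1$; - if $f(e)=f(e')\neq\bot$ and $e\neq e'$, then no $X\in\mathsf{Con}_0$ contains both $e$ and $e'$. $\mathbf{RES}$ is the category of RESs and RES-morphisms, with composition of partial functions. *)

theory Defs
  imports Main
begin

text \<open>Performing (Fwd e) or reversing (Rev e, i.e. underline e) an event.\<close>
datatype 'a act = Fwd 'a | Rev 'a

fun act_ev :: "'a act \<Rightarrow> 'a" where
  "act_ev (Fwd e) = e"
| "act_ev (Rev e) = e"

text \<open>A reversible event structure: events, consistency, enabling relation
  (triples (X, Y, e*) meaning X \<oslash> Y \<turnstile> e*).\<close>
record 'a res =
  ev  :: "'a set"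
  con :: "'a set set"
  en  :: "('a set \<times> 'a set \<times> 'a act) set"

definition is_res :: "'a res \<Rightarrow> bool" where
  "is_res R \<longleftrightarrow>
     (\<forall>X\<in>con R. finite X \<and> X \<subseteq> ev R) \<and>
     (\<forall>X\<in>con R. \<forall>Z. Z \<subseteq> X \<longrightarrow> Z \<in> con R) \<and>
     (\<forall>X Y a. (X, Y, a) \<in> en R \<longrightarrow> X \<in> con R \<and> Y \<subseteq> ev R \<and> act_ev a \<in> ev R) \<and>
     (\<forall>X Y a. (X, Y, a) \<in> en R \<longrightarrow> (X \<union> {act_ev a}) \<inter> Y = {}) \<and>
     (\<forall>X Y e. (X, Y, Rev e) \<in> en R \<longrightarrow> e \<in> X) \<and>
     (\<forall>X Y a X'. (X, Y, a) \<in> en R \<longrightarrow> X \<subseteq> X' \<longrightarrow> X' \<in> con R \<longrightarrow> X' \<inter> Y = {}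
        \<longrightarrow> (X', Y, a) \<in> en R)"

definition pimg :: "('a \<Rightarrow> 'b option) \<Rightarrow> 'a set \<Rightarrow> 'b set" where
  "pimg f X = {y. \<exists>x\<in>X. f x = Some y}"

text \<open>f(e)* : apply f to the event of an action (only used when f e is defined).\<close>
definition act_img :: "('a \<Rightarrow> 'b option) \<Rightarrow> 'a act \<Rightarrow> 'b act" where
  "act_img f a = map_act (\<lambda>x. the (f x)) a"

definition res_morph :: "'a res \<Rightarrow> 'b res \<Rightarrow> ('a \<Rightarrow> 'b option) \<Rightarrow> bool" where
  "res_morph R0 R1 f \<longleftrightarrow>
     (\<forall>x. x \<notin> ev R0 \<longrightarrow> f x = None) \<and>
     (\<forall>x y. f x = Some y \<longrightarrow> y \<in> ev R1) \<and>
     (\<forall>X Y a. (X, Y, a) \<in> en R0 \<longrightarrow> f (act_ev a) \<noteq> None \<longrightarrow>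
        (\<exists>Y1. Y1 \<subseteq> ev R1 \<and>
              (\<forall>e0\<in>ev R0. (\<exists>y\<in>Y1. f e0 = Some y) \<longrightarrow> e0 \<in> Y) \<and>
              (pimg f X, Y1, act_img f a) \<in> en R1)) \<and>
     (\<forall>X0\<in>con R0. pimg f X0 \<in> con R1) \<and>
     (\<forall>e e'. f e = f e' \<longrightarrow> f e \<noteq> None \<longrightarrow> e \<noteq> e' \<longrightarrow>
        \<not> (\<exists>X\<in>con R0. e \<in> X \<and> e' \<in> X))"

text \<open>The sum E0 + E1; tagged events (0,e),(1,e) are Inl e, Inr e.\<close>
definition sum_res :: "'a res \<Rightarrow> 'b res \<Rightarrow> ('a + 'b) res" where
  "sum_res R0 R1 =
    (let E = Inl ` ev R0 \<union> Inr ` ev R1 in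
     \<lparr> ev = E,
       con = {Inl ` X0 | X0. X0 \<in> con R0} \<union> {Inr ` X1 | X1. X1 \<in> con R1},
       en = {(Inl ` X0, Inl ` Y0 \<union> (E - Inl ` ev R0), map_act Inl a) | X0 Y0 a.
                X0 \<subseteq> ev R0 \<and> Y0 \<subseteq> ev R0 \<and> (X0, Y0, a) \<in> en R0}
          \<union> {(Inr ` X1, Inr ` Y1 \<union> (E - Inr ` ev R1), map_act Inr a) | X1 Y1 a.
                X1 \<subseteq> ev R1 \<and> Y1 \<subseteq> ev R1 \<and> (X1, Y1, a) \<in> en R1} \<rparr>)"

definition inj0 :: "'a res \<Rightarrow> 'a \<Rightarrow> ('a + 'b) option" where
  "inj0 R0 x = (if x \<in> ev R0 then Some (Inl x) else None)"

definition inj1 :: "'b res \<Rightarrow> 'b \<Rightarrow> ('a + 'b) option" where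
  "inj1 R1 x = (if x \<in> ev R1 then Some (Inr x) else None)"

end

theory Submission
  imports Defs
begin

text \<open>Everything is checked one summand at a time. An enabling of the sum is an enabling of
  one summand transported along its injection \<open>t\<close>, with all events of the other summand
  added to the preventing set; this is why each RES axiom, and the morphism condition for
  the copairing, reduces to the same property of the summand. The copairing
  \<open>case_sum f0 f1\<close> is the only candidate mediating morphism, since a morphism is
  undefined outside its domain of events.\<close>

lemma is_resI:
  assumes "\<And>X. X \<in> con R \<Longrightarrow> finite X \<and> X \<subseteq> ev R"
    and "\<And>X Z. X \<in> con R \<Longrightarrow> Z \<subseteq> X \<Longrightarrow> Z \<in> con R"
    and "\<And>X Y a. (X, Y, a) \<in> en R \<Longrightarrow> X \<in> con R \<and> Y \<subseteq> ev R \<and> act_ev a \<in> ev R"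
    and "\<And>X Y a. (X, Y, a) \<in> en R \<Longrightarrow> (X \<union> {act_ev a}) \<inter> Y = {}"
    and "\<And>X Y e. (X, Y, Rev e) \<in> en R \<Longrightarrow> e \<in> X"
    and "\<And>X Y a X'. (X, Y, a) \<in> en R \<Longrightarrow> X \<subseteq> X' \<Longrightarrow> X' \<in> con R \<Longrightarrow> X' \<inter> Y = {} \<Longrightarrow>
           (X', Y, a) \<in> en R"
  shows "is_res R"
  unfolding is_res_def
  by (intro conjI) (use assms(1) in blast, use assms(2) in blast, use assms(3) in blast,
      use assms(4) in blast, use assms(5) in blast, use assms(6) in blast)

lemma is_resD:
  assumes "is_res R"
  shows "\<forall>X\<in>con R. finite X \<and> X \<subseteq> ev R"
    and "\<forall>X\<in>con R. \<forall>Z. Z \<subseteq> X \<longrightarrow> Z \<in> con R"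
    and "\<forall>X Y a. (X, Y, a) \<in> en R \<longrightarrow> X \<in> con R \<and> Y \<subseteq> ev R \<and> act_ev a \<in> ev R"
    and "\<forall>X Y a. (X, Y, a) \<in> en R \<longrightarrow> (X \<union> {act_ev a}) \<inter> Y = {}"
    and "\<forall>X Y e. (X, Y, Rev e) \<in> en R \<longrightarrow> e \<in> X"
    and "\<forall>X Y a X'. (X, Y, a) \<in> en R \<longrightarrow> X \<subseteq> X' \<longrightarrow> X' \<in> con R \<longrightarrow> X' \<inter> Y = {} \<longrightarrow>
           (X', Y, a) \<in> en R"
  using assms unfolding is_res_def by - (elim conjE; assumption)+

context
  fixes R :: "'a res"
  assumes res: "is_res R"
begin

lemma is_res_con_subset: "X \<in> con R \<Longrightarrow> finite X \<and> X \<subseteq> ev R"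
  using is_resD(1)[OF res] by blast

lemma is_res_con_downward_closed: "X \<in> con R \<Longrightarrow> Z \<subseteq> X \<Longrightarrow> Z \<in> con R"
  using is_resD(2)[OF res] by blast

lemma is_res_enD: "(X, Y, a) \<in> en R \<Longrightarrow> X \<in> con R \<and> Y \<subseteq> ev R \<and> act_ev a \<in> ev R"
  using is_resD(3)[OF res] by blast

lemma is_res_en_disjoint: "(X, Y, a) \<in> en R \<Longrightarrow> (X \<union> {act_ev a}) \<inter> Y = {}"
  using is_resD(4)[OF res] by blast

lemma is_res_en_Rev: "(X, Y, Rev e) \<in> en R \<Longrightarrow> e \<in> X"
  using is_resD(5)[OF res] by blast

lemma is_res_en_mono:
  "(X, Y, a) \<in> en R \<Longrightarrow> X \<subseteq> X' \<Longrightarrow> X' \<in> con R \<Longrightarrow> X' \<inter> Y = {} \<Longrightarrow> (X', Y, a) \<in> en R"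
  using is_resD(6)[OF res] by blast

end

lemma res_morphI:
  assumes "\<And>x. x \<notin> ev R0 \<Longrightarrow> f x = None"
    and "\<And>x y. f x = Some y \<Longrightarrow> y \<in> ev R1"
    and "\<And>X Y a. (X, Y, a) \<in> en R0 \<Longrightarrow> f (act_ev a) \<noteq> None \<Longrightarrow>
           \<exists>Y1. Y1 \<subseteq> ev R1 \<and> (\<forall>e0\<in>ev R0. (\<exists>y\<in>Y1. f e0 = Some y) \<longrightarrow> e0 \<in> Y) \<and>
                (pimg f X, Y1, act_img f a) \<in> en R1"
    and "\<And>X. X \<in> con R0 \<Longrightarrow> pimg f X \<in> con R1"
    and "\<And>e e' X. f e = f e' \<Longrightarrow> f e \<noteq> None \<Longrightarrow> X \<in> con R0 \<Longrightarrow> e \<in> X \<Longrightarrow> e' \<in> X \<Longrightarrow> e = e'"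
  shows "res_morph R0 R1 f"
  unfolding res_morph_def
  by (intro conjI) (use assms(1) in blast, use assms(2) in blast, use assms(3) in blast,
      use assms(4) in blast, use assms(5) in blast)

lemma res_morphD:
  assumes "res_morph R0 R1 f"
  shows "\<forall>x. x \<notin> ev R0 \<longrightarrow> f x = None"
    and "\<forall>x y. f x = Some y \<longrightarrow> y \<in> ev R1"
    and "\<forall>X Y a. (X, Y, a) \<in> en R0 \<longrightarrow> f (act_ev a) \<noteq> None \<longrightarrow>
           (\<exists>Y1. Y1 \<subseteq> ev R1 \<and> (\<forall>e0\<in>ev R0. (\<exists>y\<in>Y1. f e0 = Some y) \<longrightarrow> e0 \<in> Y) \<and>
                 (pimg f X, Y1, act_img f a) \<in> en R1)"
    and "\<forall>X0\<in>con R0. pimg f X0 \<in> con R1"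
    and "\<forall>e e'. f e = f e' \<longrightarrow> f e \<noteq> None \<longrightarrow> e \<noteq> e' \<longrightarrow> \<not> (\<exists>X\<in>con R0. e \<in> X \<and> e' \<in> X)"
  using assms unfolding res_morph_def by - (elim conjE; assumption)+

context
  fixes R S :: "_ res" and f
  assumes morph: "res_morph R S f"
begin

lemma res_morph_undefined: "x \<notin> ev R \<Longrightarrow> f x = None"
  using res_morphD(1)[OF morph] by blast

lemma res_morph_range: "f x = Some y \<Longrightarrow> y \<in> ev S"
  using res_morphD(2)[OF morph] by blast

lemma res_morph_en:
  "(X, Y, a) \<in> en R \<Longrightarrow> f (act_ev a) \<noteq> None \<Longrightarrow>
    \<exists>Y1. Y1 \<subseteq> ev S \<and> (\<forall>e0\<in>ev R. (\<exists>y\<in>Y1. f e0 = Some y) \<longrightarrow> e0 \<in> Y) \<and>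
         (pimg f X, Y1, act_img f a) \<in> en S"
  using res_morphD(3)[OF morph] by blast

lemma res_morph_con: "X \<in> con R \<Longrightarrow> pimg f X \<in> con S"
  using res_morphD(4)[OF morph] by blast

lemma res_morph_inj_on_con:
  "f e = f e' \<Longrightarrow> f e \<noteq> None \<Longrightarrow> X \<in> con R \<Longrightarrow> e \<in> X \<Longrightarrow> e' \<in> X \<Longrightarrow> e = e'"
  using res_morphD(5)[OF morph] by blast

end

subsection \<open>Transporting an event structure along an injection\<close>

definition tag_en :: "('a \<Rightarrow> 'c) \<Rightarrow> 'c set \<Rightarrow> 'a res \<Rightarrow> ('c set \<times> 'c set \<times> 'c act) set" where
  "tag_en t E R = {(t ` X, t ` Y \<union> (E - t ` ev R), map_act t a) | X Y a.
                     X \<subseteq> ev R \<and> Y \<subseteq> ev R \<and> (X, Y, a) \<in> en R}"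

definition tag_map :: "'a res \<Rightarrow> ('a \<Rightarrow> 'c) \<Rightarrow> 'a \<Rightarrow> 'c option" where
  "tag_map R t x = (if x \<in> ev R then Some (t x) else None)"

lemma tag_enI:
  "X \<subseteq> ev R \<Longrightarrow> Y \<subseteq> ev R \<Longrightarrow> (X, Y, a) \<in> en R \<Longrightarrow>
    (t ` X, t ` Y \<union> (E - t ` ev R), map_act t a) \<in> tag_en t E R"
  unfolding tag_en_def by blast

lemma tag_enE:
  assumes "(X, Y, a) \<in> tag_en t E R"
  obtains X0 Y0 b where "X = t ` X0" "Y = t ` Y0 \<union> (E - t ` ev R)" "a = map_act t b"
    "X0 \<subseteq> ev R" "Y0 \<subseteq> ev R" "(X0, Y0, b) \<in> en R"
  using assms unfolding tag_en_def by blast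

lemma pimg_tag_map: "X \<subseteq> ev R \<Longrightarrow> pimg (tag_map R t) X = t ` X"
  by (auto simp: pimg_def tag_map_def)

lemma act_ev_map_act [simp]: "act_ev (map_act f a) = f (act_ev a)"
  by (cases a) auto

context
  fixes t :: "'a \<Rightarrow> 'c" and E :: "'c set" and R :: "'a res"
  assumes res: "is_res R"
begin

lemma tag_en_wf:
  assumes "(X, Y, a) \<in> tag_en t E R" and "t ` ev R \<subseteq> E"
  shows "X \<in> (`) t ` con R" "Y \<subseteq> E" "act_ev a \<in> t ` ev R"
proof -
  obtain X0 Y0 b where tagged: "X = t ` X0" "Y = t ` Y0 \<union> (E - t ` ev R)" "a = map_act t b"
      "Y0 \<subseteq> ev R" "(X0, Y0, b) \<in> en R"
    using assms(1) by (rule tag_enE)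
  moreover have "X0 \<in> con R" "act_ev b \<in> ev R"
    using is_res_enD[OF res tagged(5)] by auto
  ultimately show "X \<in> (`) t ` con R" "Y \<subseteq> E" "act_ev a \<in> t ` ev R"
    using assms(2) by auto
qed

lemma tag_en_disjoint:
  assumes "inj t" and "(X, Y, a) \<in> tag_en t E R"
  shows "(X \<union> {act_ev a}) \<inter> Y = {}"
  using assms(2)
proof (cases rule: tag_enE)
  case (1 X0 Y0 b)
  have "(X0 \<union> {act_ev b}) \<inter> Y0 = {}" "act_ev b \<in> ev R"
    using is_res_en_disjoint[OF res] is_res_enD[OF res] 1(6) by auto
  with 1 \<open>inj t\<close> show ?thesis
    by (auto simp: inj_image_mem_iff inj_eq)
qed

lemma tag_en_Rev:
  assumes "inj t" and "(X, Y, Rev e) \<in> tag_en t E R"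
  shows "e \<in> X"
  using assms(2)
proof (cases rule: tag_enE)
  case (1 X0 Y0 b)
  then obtain x where "b = Rev x" "e = t x"
    by (cases b) auto
  with 1 is_res_en_Rev[OF res] show ?thesis
    by blast
qed

text \<open>A consistent set disjoint from the preventing set either lies in the summand, or it lies
  outside it, in which case it is contained in the preventing set and hence empty.\<close>

lemma tag_en_mono:
  assumes "inj t" and en: "(X, Y, a) \<in> tag_en t E R" and "X \<subseteq> X'" and "X' \<inter> Y = {}"
    and X': "X' \<in> (`) t ` con R \<or> X' \<subseteq> E - t ` ev R"
  shows "(X', Y, a) \<in> tag_en t E R"
  using en
proof (cases rule: tag_enE)
  case (1 X0 Y0 b)
  from X' show ?thesis
  proof
    assume "X' \<in> (`) t ` con R"
    then obtain X0' where X0': "X' = t ` X0'" "X0' \<in> con R"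
      by blast
    have "X0 \<subseteq> X0'" "X0' \<inter> Y0 = {}"
      using 1 X0' \<open>X \<subseteq> X'\<close> \<open>X' \<inter> Y = {}\<close> \<open>inj t\<close>
      by (auto simp: inj_image_subset_iff inj_image_mem_iff)
    then have "(X0', Y0, b) \<in> en R"
      using is_res_en_mono[OF res 1(6)] X0'(2) by blast
    with X0' 1 is_res_con_subset[OF res] show ?thesis
      using tag_enI[of X0' R Y0 b t E] by auto
  next
    assume "X' \<subseteq> E - t ` ev R"
    then have "X' = X"
      using 1(2) \<open>X \<subseteq> X'\<close> \<open>X' \<inter> Y = {}\<close> by blast
    with en show ?thesis
      by simp
  qed
qed

lemma res_morph_tag_map:
  assumes "inj t" and "t ` ev R \<subseteq> ev S" and "(`) t ` con R \<subseteq> con S"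
    and "tag_en t (ev S) R \<subseteq> en S"
  shows "res_morph R S (tag_map R t)"
proof (rule res_morphI)
  fix X Y a
  assume en: "(X, Y, a) \<in> en R"
  then have sub: "X \<subseteq> ev R" "Y \<subseteq> ev R" "act_ev a \<in> ev R"
    using is_res_enD[OF res] is_res_con_subset[OF res] by blast+
  have "act_img (tag_map R t) a = map_act t a"
    using sub(3) by (cases a) (auto simp: act_img_def tag_map_def)
  moreover have "(t ` X, t ` Y \<union> (ev S - t ` ev R), map_act t a) \<in> en S"
    using tag_enI[OF sub(1,2) en, of t "ev S"] assms(4) by blast
  ultimately have "(pimg (tag_map R t) X, t ` Y \<union> (ev S - t ` ev R), act_img (tag_map R t) a) \<in> en S"
    by (simp add: pimg_tag_map[OF sub(1)])
  moreover have "t ` Y \<union> (ev S - t ` ev R) \<subseteq> ev S"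
    using sub(2) assms(2) by blast
  moreover have "\<forall>e0\<in>ev R. (\<exists>y\<in>t ` Y \<union> (ev S - t ` ev R). tag_map R t e0 = Some y) \<longrightarrow> e0 \<in> Y"
    using \<open>inj t\<close> by (auto simp: tag_map_def inj_image_mem_iff)
  ultimately show "\<exists>Y1. Y1 \<subseteq> ev S \<and> (\<forall>e0\<in>ev R. (\<exists>y\<in>Y1. tag_map R t e0 = Some y) \<longrightarrow> e0 \<in> Y) \<and>
      (pimg (tag_map R t) X, Y1, act_img (tag_map R t) a) \<in> en S"
    by blast
next
  fix X
  assume "X \<in> con R"
  then show "pimg (tag_map R t) X \<in> con S"
    using is_res_con_subset[OF res] assms(3) by (auto simp: pimg_tag_map)
qed (use assms in \<open>auto simp: tag_map_def inj_eq split: if_splits\<close>)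

end

lemma map_comp_tag_map_iff:
  assumes "\<And>x. x \<notin> ev R \<Longrightarrow> f x = None"
  shows "h \<circ>\<^sub>m tag_map R t = f \<longleftrightarrow> (\<forall>x\<in>ev R. h (t x) = f x)"
  using assms by (auto simp: fun_eq_iff map_comp_def tag_map_def)

subsection \<open>Factoring a morphism through a transport\<close>

context
  fixes t :: "'a \<Rightarrow> 'c" and h :: "'c \<Rightarrow> 'd option" and f :: "'a \<Rightarrow> 'd option"
  assumes factor: "\<And>x. h (t x) = f x"
begin

lemma pimg_image_factor: "pimg h (t ` X) = pimg f X"
  using factor by (auto simp: pimg_def)

lemma act_img_map_act_factor: "act_img h (map_act t a) = act_img f a"
  using factor by (cases a) (auto simp: act_img_def)

lemma tag_en_factor:
  assumes morph: "res_morph R S f" and en: "(X, Y, a) \<in> tag_en t E R" and "h (act_ev a) \<noteq> None"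
  shows "\<exists>Y1. Y1 \<subseteq> ev S \<and> (\<forall>e0\<in>E. (\<exists>y\<in>Y1. h e0 = Some y) \<longrightarrow> e0 \<in> Y) \<and>
           (pimg h X, Y1, act_img h a) \<in> en S"
  using en
proof (cases rule: tag_enE)
  case (1 X0 Y0 b)
  have "f (act_ev b) \<noteq> None"
    using \<open>h (act_ev a) \<noteq> None\<close> 1(3) factor by simp
  then obtain Y1 where Y1: "Y1 \<subseteq> ev S" "\<forall>e0\<in>ev R. (\<exists>y\<in>Y1. f e0 = Some y) \<longrightarrow> e0 \<in> Y0"
      "(pimg f X0, Y1, act_img f b) \<in> en S"
    using res_morph_en[OF morph 1(6)] by blast
  have "\<forall>e0\<in>E. (\<exists>y\<in>Y1. h e0 = Some y) \<longrightarrow> e0 \<in> Y"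
    using Y1(2) 1(2) factor by auto
  with Y1 1 show ?thesis
    by (auto simp: pimg_image_factor act_img_map_act_factor)
qed

lemma factor_inj_on_con:
  assumes "res_morph R S f" and "X \<in> con R" and "e \<in> t ` X" "e' \<in> t ` X"
    and "h e = h e'" "h e \<noteq> None"
  shows "e = e'"
proof -
  obtain x x' where "e = t x" "e' = t x'" "x \<in> X" "x' \<in> X"
    using assms(3,4) by blast
  with assms factor res_morph_inj_on_con[of R S f x x' X] show ?thesis
    by auto
qed

end

subsection \<open>The sum\<close>

lemma ev_sum_res [simp]: "ev (sum_res R0 R1) = Inl ` ev R0 \<union> Inr ` ev R1"
  by (simp add: sum_res_def Let_def)

lemma con_sum_res [simp]: "con (sum_res R0 R1) = (`) Inl ` con R0 \<union> (`) Inr ` con R1"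
  by (auto simp: sum_res_def Let_def)

lemma en_sum_res:
  "en (sum_res R0 R1) = tag_en Inl (ev (sum_res R0 R1)) R0 \<union> tag_en Inr (ev (sum_res R0 R1)) R1"
  by (simp add: sum_res_def Let_def tag_en_def)

lemma inj0_eq_tag_map: "inj0 R0 = tag_map R0 Inl"
  by (simp add: fun_eq_iff inj0_def tag_map_def)

lemma inj1_eq_tag_map: "inj1 R1 = tag_map R1 Inr"
  by (simp add: fun_eq_iff inj1_def tag_map_def)

lemma con_sum_res_side:
  assumes "is_res R0" "is_res R1" "X \<in> con (sum_res R0 R1)"
  shows "X \<in> (`) Inl ` con R0 \<or> X \<subseteq> ev (sum_res R0 R1) - Inl ` ev R0"
    and "X \<in> (`) Inr ` con R1 \<or> X \<subseteq> ev (sum_res R0 R1) - Inr ` ev R1"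
  using assms(3) by (auto dest!: is_res_con_subset[OF assms(1)] is_res_con_subset[OF assms(2)])

lemma is_res_sum_res:
  assumes R0: "is_res R0" and R1: "is_res R1"
  shows "is_res (sum_res R0 R1)"
proof (rule is_resI)
  fix X
  assume X: "X \<in> con (sum_res R0 R1)"
  then show "finite X \<and> X \<subseteq> ev (sum_res R0 R1)"
    by (auto dest!: is_res_con_subset[OF R0] is_res_con_subset[OF R1])
  fix Z
  assume "Z \<subseteq> X"
  with X show "Z \<in> con (sum_res R0 R1)"
    using is_res_con_downward_closed[OF R0] is_res_con_downward_closed[OF R1]
    by (auto simp: subset_image_iff)
next
  fix X Y a
  assume "(X, Y, a) \<in> en (sum_res R0 R1)"
  then consider (left) "(X, Y, a) \<in> tag_en Inl (ev (sum_res R0 R1)) R0"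
    | (right) "(X, Y, a) \<in> tag_en Inr (ev (sum_res R0 R1)) R1"
    unfolding en_sum_res by blast
  then have "(X \<in> con (sum_res R0 R1) \<and> Y \<subseteq> ev (sum_res R0 R1) \<and> act_ev a \<in> ev (sum_res R0 R1))
      \<and> (X \<union> {act_ev a}) \<inter> Y = {}
      \<and> (\<forall>X'. X \<subseteq> X' \<longrightarrow> X' \<in> con (sum_res R0 R1) \<longrightarrow> X' \<inter> Y = {} \<longrightarrow>
             (X', Y, a) \<in> en (sum_res R0 R1))"
  proof cases
    case left
    from tag_en_wf[OF R0 left] tag_en_disjoint[OF R0 inj_Inl left]
      tag_en_mono[OF R0 inj_Inl left] con_sum_res_side(1)[OF R0 R1]
    show ?thesis
      by (auto simp: en_sum_res)
  next
    case right
    from tag_en_wf[OF R1 right] tag_en_disjoint[OF R1 inj_Inr right]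
      tag_en_mono[OF R1 inj_Inr right] con_sum_res_side(2)[OF R0 R1]
    show ?thesis
      by (auto simp: en_sum_res)
  qed
  then show "X \<in> con (sum_res R0 R1) \<and> Y \<subseteq> ev (sum_res R0 R1) \<and> act_ev a \<in> ev (sum_res R0 R1)"
    and "(X \<union> {act_ev a}) \<inter> Y = {}"
    and "\<And>X'. X \<subseteq> X' \<Longrightarrow> X' \<in> con (sum_res R0 R1) \<Longrightarrow> X' \<inter> Y = {} \<Longrightarrow>
           (X', Y, a) \<in> en (sum_res R0 R1)"
    by blast+
next
  fix X Y e
  assume "(X, Y, Rev e) \<in> en (sum_res R0 R1)"
  then show "e \<in> X"
    unfolding en_sum_res using tag_en_Rev[OF R0 inj_Inl] tag_en_Rev[OF R1 inj_Inr] by blast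
qed

lemma res_morph_inj0:
  assumes "is_res R0"
  shows "res_morph R0 (sum_res R0 R1) (inj0 R0)"
  unfolding inj0_eq_tag_map
  by (rule res_morph_tag_map[OF assms]) (auto simp: en_sum_res)

lemma res_morph_inj1:
  assumes "is_res R1"
  shows "res_morph R1 (sum_res R0 R1) (inj1 R1)"
  unfolding inj1_eq_tag_map
  by (rule res_morph_tag_map[OF assms]) (auto simp: en_sum_res)

lemma res_morph_case_sum:
  assumes m0: "res_morph R0 R2 f0" and m1: "res_morph R1 R2 f1"
  shows "res_morph (sum_res R0 R1) R2 (case_sum f0 f1)"
proof (rule res_morphI)
  fix X Y a
  assume "(X, Y, a) \<in> en (sum_res R0 R1)" "case_sum f0 f1 (act_ev a) \<noteq> None"
  then show "\<exists>Y1. Y1 \<subseteq> ev R2 \<and>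
      (\<forall>e0\<in>ev (sum_res R0 R1). (\<exists>y\<in>Y1. case_sum f0 f1 e0 = Some y) \<longrightarrow> e0 \<in> Y) \<and>
      (pimg (case_sum f0 f1) X, Y1, act_img (case_sum f0 f1) a) \<in> en R2"
    unfolding en_sum_res
    using tag_en_factor[where t = Inl and h = "case_sum f0 f1", OF sum.case(1) m0]
      tag_en_factor[where t = Inr and h = "case_sum f0 f1", OF sum.case(2) m1]
    by (elim UnE) assumption+
next
  fix X
  assume "X \<in> con (sum_res R0 R1)"
  then show "pimg (case_sum f0 f1) X \<in> con R2"
    using res_morph_con[OF m0] res_morph_con[OF m1]
    by (auto simp: pimg_image_factor[where t = Inl and h = "case_sum f0 f1", OF sum.case(1)] pimg_image_factor[where t = Inr and h = "case_sum f0 f1", OF sum.case(2)])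
next
  fix e e' X
  assume eq: "case_sum f0 f1 e = case_sum f0 f1 e'" "case_sum f0 f1 e \<noteq> None" "e \<in> X" "e' \<in> X"
    and "X \<in> con (sum_res R0 R1)"
  from \<open>X \<in> con (sum_res R0 R1)\<close> consider X0 where "X0 \<in> con R0" "X = Inl ` X0"
    | X1 where "X1 \<in> con R1" "X = Inr ` X1"
    by auto
  then show "e = e'"
  proof cases
    case 1
    with factor_inj_on_con[where t = Inl and h = "case_sum f0 f1", OF sum.case(1) m0] eq
    show ?thesis
      by blast
  next
    case 2
    with factor_inj_on_con[where t = Inr and h = "case_sum f0 f1", OF sum.case(2) m1] eq
    show ?thesis
      by blast
  qed
qed (use res_morph_undefined[OF m0] res_morph_undefined[OF m1]
       res_morph_range[OF m0] res_morph_range[OF m1] in \<open>auto simp: image_iff split: sum.splits\<close>)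

lemma sum_res_universal:
  assumes m0: "res_morph R0 R2 f0" and m1: "res_morph R1 R2 f1"
  shows "\<exists>!h. res_morph (sum_res R0 R1) R2 h \<and> h \<circ>\<^sub>m inj0 R0 = f0 \<and> h \<circ>\<^sub>m inj1 R1 = f1"
proof
  note factor_iff = inj0_eq_tag_map inj1_eq_tag_map
    map_comp_tag_map_iff[OF res_morph_undefined[OF m0]]
    map_comp_tag_map_iff[OF res_morph_undefined[OF m1]]
  show "res_morph (sum_res R0 R1) R2 (case_sum f0 f1) \<and>
      case_sum f0 f1 \<circ>\<^sub>m inj0 R0 = f0 \<and> case_sum f0 f1 \<circ>\<^sub>m inj1 R1 = f1"
    using res_morph_case_sum[OF m0 m1] by (simp add: factor_iff)
  fix h
  assume "res_morph (sum_res R0 R1) R2 h \<and> h \<circ>\<^sub>m inj0 R0 = f0 \<and> h \<circ>\<^sub>m inj1 R1 = f1"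
  then have h: "res_morph (sum_res R0 R1) R2 h"
    and h0: "\<forall>x\<in>ev R0. h (Inl x) = f0 x" and h1: "\<forall>x\<in>ev R1. h (Inr x) = f1 x"
    by (simp_all add: factor_iff)
  show "h = case_sum f0 f1"
  proof
    fix z
    show "h z = case_sum f0 f1 z"
    proof (cases "z \<in> ev (sum_res R0 R1)")
      case True
      with h0 h1 show ?thesis
        by auto
    next
      case False
      then have "case_sum f0 f1 z = None"
        using res_morph_undefined[OF m0] res_morph_undefined[OF m1] by (cases z) (auto simp: image_iff)
      with False res_morph_undefined[OF h] show ?thesis
        by simp
    qed
  qed
qed

theorem mainTheorem7:
  fixes R0 :: "'a res" and R1 :: "'b res"
  assumes "is_res R0" and "is_res R1"
  shows "is_res (sum_res R0 R1)
    \<and> res_morph R0 (sum_res R0 R1) (inj0 R0 :: 'a \<Rightarrow> ('a + 'b) option)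
    \<and> res_morph R1 (sum_res R0 R1) (inj1 R1 :: 'b \<Rightarrow> ('a + 'b) option)
    \<and> (\<forall>(R2 :: 'c res) f0 f1. is_res R2 \<and> res_morph R0 R2 f0 \<and> res_morph R1 R2 f1 \<longrightarrow>
          (\<exists>!h. res_morph (sum_res R0 R1) R2 h \<and> h \<circ>\<^sub>m inj0 R0 = f0 \<and> h \<circ>\<^sub>m inj1 R1 = f1))"
  using is_res_sum_res[OF assms] res_morph_inj0[OF assms(1)] res_morph_inj1[OF assms(2)]
    sum_res_universal by blast

end
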